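(* Let $R$ be an integral domain with field of fractions $K$. If $d_1,\dots,d_n$ ($n\ge1$) are nonzero derivations on $R$ and $D=d_1\circ\cdots\circ d_n$, then $D/j$ (i.e. $x\mapsto D(x)/x$), as a map from the semigroup $R^*$ to $K$, is a generalized polynomial of degree at most $n$. If $R$ has characteristic zero, then $D/j$ has degree exactly $n$.
   Context: Rings are commutative with unit. A derivation on $R$ is a map $d\colon R\to R$ with $d(x+y)=d(x)+d(y)$ and $d(xy)=d(x)y+d(y)x$. $R^*$ is the abelian semigroup $R\setminus\{0\}$ under multiplication; $j$ is the identity map. For $f$ from an abelian semigroup $G$ to an abelian group, $\Delta_g f(x)=f(x\cdot g)-f(x)$ (using $G$'s operation); $f$ is a generalized polynomial if for some $k$, $\Delta_{g_1}\cdots\Delta_{g_{k+1}}f=0$ for all $g_i\in G$; its degree is the least such $k$ (the zero function has degree $-1$). *)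

theory Defs
  imports "HOL-Computational_Algebra.Fraction_Field"
begin

definition derivation :: "('a::comm_ring_1 \<Rightarrow> 'a) \<Rightarrow> bool" where
  "derivation d \<longleftrightarrow> (\<forall>x y. d (x + y) = d x + d y) \<and> (\<forall>x y. d (x * y) = d x * y + d y * x)"

definition Delta :: "'a::times \<Rightarrow> ('a \<Rightarrow> 'b::ab_group_add) \<Rightarrow> 'a \<Rightarrow> 'b" where
  "Delta g f = (\<lambda>x. f (x * g) - f x)"

fun Deltas :: "'a::times list \<Rightarrow> ('a \<Rightarrow> 'b::ab_group_add) \<Rightarrow> 'a \<Rightarrow> 'b" where
  "Deltas [] f = f"
| "Deltas (g # gs) f = Delta g (Deltas gs f)"

text \<open>f, viewed as a map on the subsemigroup S, satisfies
  Delta g1 ... Delta g(k+1) f = 0 on S for all g1..g(k+1) in S.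
  (For k = -1 this says f = 0 on S.)\<close>
definition gp_vanish :: "'a::times set \<Rightarrow> ('a \<Rightarrow> 'b::ab_group_add) \<Rightarrow> int \<Rightarrow> bool" where
  "gp_vanish S f k \<longleftrightarrow>
     (\<forall>gs. length gs = nat (k + 1) \<and> set gs \<subseteq> S \<longrightarrow> (\<forall>x\<in>S. Deltas gs f x = 0))"

definition gen_poly :: "'a::times set \<Rightarrow> ('a \<Rightarrow> 'b::ab_group_add) \<Rightarrow> bool" where
  "gen_poly S f \<longleftrightarrow> (\<exists>k\<ge>-1. gp_vanish S f k)"

definition gp_degree :: "'a::times set \<Rightarrow> ('a \<Rightarrow> 'b::ab_group_add) \<Rightarrow> int" where
  "gp_degree S f = (LEAST k. k \<ge> -1 \<and> gp_vanish S f k)"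

end

theory Submission
  imports Defs "HOL-Number_Theory.Cong"
begin

(* Write D_A for the composite of a subsequence A of the derivations. The general Leibniz rule
   D (x y) = \<Sum> D_A x * D_B y, summed over the splittings of the list into complementary
   subsequences A, B, becomes after division by x y
     \<Delta>_g (D/j) x = \<Sum>_{B \<noteq> []} (D_A/j) x * (D_B/j) g.
   So every difference operator strictly shortens the list of derivations, and n + 1 differences
   annihilate D/j. With all g equal, the n-fold difference is the constant n! * \<Prod> d_i g / g;
   in characteristic zero some g is moved by every d_i, so n differences do not suffice. *)

lemma Fract_sum_list_left:
  "Fract (\<Sum>p\<leftarrow>ps. f p) (q::'a::idom) = (\<Sum>p\<leftarrow>ps. Fract (f p) q)"
proof (cases "q = 0")
  case True
  then show ?thesis by (simp add: fract_collapse)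
next
  case False
  have "Fract (a + b) q = Fract a q + Fract b q" for a b
    using mult_fract_cancel[OF False, of "a + b" q] False by (simp add: algebra_simps)
  then show ?thesis by (induction ps) (simp_all add: fract_collapse)
qed

lemma Fract_eq_0_iff: "b \<noteq> 0 \<Longrightarrow> Fract a b = 0 \<longleftrightarrow> a = 0"
  by (simp add: Zero_fract_def eq_fract(1))

lemma derivation_add: "derivation d \<Longrightarrow> d (x + y) = d x + d y"
  and derivation_mult: "derivation d \<Longrightarrow> d (x * y) = d x * y + d y * x"
  unfolding derivation_def by blast+

lemma derivation_zero: "derivation d \<Longrightarrow> d 0 = 0"
  using derivation_add[of d 0 0] by simp

lemma derivation_sum_list:
  "derivation d \<Longrightarrow> d (\<Sum>p\<leftarrow>ps. f p) = (\<Sum>p\<leftarrow>ps. d (f p))"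
  by (induction ps) (simp_all add: derivation_zero derivation_add)

lemma derivation_of_nat_mult: "derivation d \<Longrightarrow> d (of_nat m * x) = of_nat m * d x"
  by (induction m) (simp_all add: derivation_zero derivation_add distrib_right)

fun splits :: "'b list \<Rightarrow> ('b list \<times> 'b list) list" where
  "splits [] = [([], [])]"
| "splits (d # ds) = map (\<lambda>p. (d # fst p, snd p)) (splits ds) @ map (\<lambda>p. (fst p, d # snd p)) (splits ds)"

lemma splits_eq_Cons: "splits ds = (ds, []) # tl (splits ds)"
proof (induction ds)
  case (Cons d ds)
  have "splits (d # ds) = map (\<lambda>p. (d # fst p, snd p)) ((ds, []) # tl (splits ds))
      @ map (\<lambda>p. (fst p, d # snd p)) (splits ds)"
    using Cons by (metis splits.simps(2))
  then show ?case by simp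
qed simp

lemma length_splits:
  "p \<in> set (splits ds) \<Longrightarrow> length (fst p) + length (snd p) = length ds"
  by (induction ds arbitrary: p) auto

lemma set_fst_splits_subset: "p \<in> set (splits ds) \<Longrightarrow> set (fst p) \<subseteq> set ds"
  by (induction ds arbitrary: p) (simp, fastforce)

lemma snd_ne_Nil_if_in_tl_splits: "p \<in> set (tl (splits ds)) \<Longrightarrow> snd p \<noteq> []"
proof (induction ds arbitrary: p)
  case (Cons d ds)
  have "tl (splits (d # ds)) = map (\<lambda>p. (d # fst p, snd p)) (tl (splits ds)) @ map (\<lambda>p. (fst p, d # snd p)) (splits ds)"
    by (subst splits.simps, subst splits_eq_Cons) simp
  then show ?case using Cons by auto
qed simp

lemma fst_tl_splits:
  assumes "p \<in> set (tl (splits ds))"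
  shows "length (fst p) < length ds" and "set (fst p) \<subseteq> set ds"
proof -
  have p: "p \<in> set (splits ds)" using assms by (metis list.set_intros(2) splits_eq_Cons)
  show "length (fst p) < length ds"
    using length_splits[OF p] snd_ne_Nil_if_in_tl_splits[OF assms] by (cases "snd p") auto
  show "set (fst p) \<subseteq> set ds" using set_fst_splits_subset[OF p] .
qed

lemma prod_list_splits:
  "p \<in> set (splits ds) \<Longrightarrow> prod_list (map h (fst p)) * prod_list (map h (snd p)) = prod_list (map h ds)"
  for h :: "'b \<Rightarrow> 'c::comm_monoid_mult"
  by (induction ds arbitrary: p) (auto simp: algebra_simps)

lemma length_filter_tl_splits_snd_singleton:
  "length (filter (\<lambda>p. length (snd p) = 1) (tl (splits ds))) = length ds"
proof -
  have "length (filter (\<lambda>p. snd p = []) (splits ds)) = 1"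
    by (induction ds) (simp_all add: filter_map o_def)
  then have "length (filter (\<lambda>p. length (snd p) = 1) (splits ds)) = length ds"
    by (induction ds) (simp_all add: filter_map o_def)
  then show ?thesis by (subst (asm) splits_eq_Cons) simp
qed

definition comp_list :: "('a \<Rightarrow> 'a) list \<Rightarrow> 'a \<Rightarrow> 'a" where
  "comp_list ds = foldr (\<circ>) ds id"

lemma comp_list_Nil [simp]: "comp_list [] x = x"
  and comp_list_Cons [simp]: "comp_list (d # ds) x = d (comp_list ds x)"
  by (simp_all add: comp_list_def)

lemma comp_list_derivations_mult:
  assumes "\<forall>d\<in>set ds. derivation d"
  shows "comp_list ds (x * y) = (\<Sum>p\<leftarrow>splits ds. comp_list (fst p) x * comp_list (snd p) y)"
  using assms
proof (induction ds)
  case (Cons d ds)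
  then have d: "derivation d" by simp
  have "comp_list (d # ds) (x * y) = d (\<Sum>p\<leftarrow>splits ds. comp_list (fst p) x * comp_list (snd p) y)"
    using Cons by simp
  also have "\<dots> = (\<Sum>p\<leftarrow>splits ds. d (comp_list (fst p) x) * comp_list (snd p) y
      + comp_list (fst p) x * d (comp_list (snd p) y))"
    using d by (simp add: derivation_sum_list derivation_mult mult.commute)
  also have "\<dots> = (\<Sum>p\<leftarrow>splits (d # ds). comp_list (fst p) x * comp_list (snd p) y)"
    by (simp add: o_def sum_list_addf)
  finally show ?case .
qed simp

definition deriv_ratio :: "('a::idom \<Rightarrow> 'a) list \<Rightarrow> 'a \<Rightarrow> 'a fract" where
  "deriv_ratio ds x = Fract (comp_list ds x) x"

lemma deriv_ratio_Nil: "x \<noteq> 0 \<Longrightarrow> deriv_ratio [] x = 1"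
  by (simp add: deriv_ratio_def One_fract_def eq_fract(1))

lemma deriv_ratio_mult:
  assumes "\<forall>d\<in>set ds. derivation d"
  shows "deriv_ratio ds (x * y) = (\<Sum>p\<leftarrow>splits ds. deriv_ratio (fst p) x * deriv_ratio (snd p) y)"
  by (simp add: deriv_ratio_def comp_list_derivations_mult[OF assms] Fract_sum_list_left)

lemma Deltas_snoc: "Deltas (gs @ [g]) f = Deltas gs (Delta g f)"
  by (induction gs) simp_all

lemma Deltas_sum_list_mult_right:
  fixes c :: "_ \<Rightarrow> 'b::ring"
  shows "Deltas gs (\<lambda>x. \<Sum>p\<leftarrow>ps. F p x * c p) x = (\<Sum>p\<leftarrow>ps. Deltas gs (F p) x * c p)"
proof (induction gs arbitrary: x)
  case (Cons g gs)
  then show ?case by (simp add: Delta_def sum_list_subtractf[symmetric] left_diff_distrib)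
qed simp

lemma Deltas_snoc_deriv_ratio:
  assumes "\<forall>d\<in>set ds. derivation d" and "g \<noteq> 0"
  shows "Deltas (gs @ [g]) (deriv_ratio ds) x
    = (\<Sum>p\<leftarrow>tl (splits ds). Deltas gs (deriv_ratio (fst p)) x * deriv_ratio (snd p) g)"
proof -
  have "Delta g (deriv_ratio ds) y
      = (\<Sum>p\<leftarrow>tl (splits ds). deriv_ratio (fst p) y * deriv_ratio (snd p) g)" for y
  proof -
    have "deriv_ratio ds (y * g)
        = (\<Sum>p\<leftarrow>(ds, []) # tl (splits ds). deriv_ratio (fst p) y * deriv_ratio (snd p) g)"
      using deriv_ratio_mult[OF assms(1)] splits_eq_Cons by metis
    then show ?thesis by (simp add: Delta_def deriv_ratio_Nil[OF assms(2)])
  qed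
  then have "Delta g (deriv_ratio ds)
      = (\<lambda>y. \<Sum>p\<leftarrow>tl (splits ds). deriv_ratio (fst p) y * deriv_ratio (snd p) g)"
    by (rule ext)
  then show ?thesis by (simp add: Deltas_snoc Deltas_sum_list_mult_right)
qed

lemma Deltas_deriv_ratio_eq_0:
  assumes "\<forall>d\<in>set ds. derivation d" and "\<forall>g\<in>set gs. g \<noteq> 0" and "length ds < length gs"
  shows "Deltas gs (deriv_ratio ds) x = 0"
  using assms
proof (induction gs arbitrary: ds x rule: rev_induct)
  case (snoc g gs)
  have "Deltas gs (deriv_ratio (fst p)) x = 0" if "p \<in> set (tl (splits ds))" for p
    using snoc fst_tl_splits[OF that] by (intro snoc.IH) auto
  then show ?case using snoc.prems by (simp add: Deltas_snoc_deriv_ratio cong: map_cong)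
qed simp

lemma Deltas_replicate_deriv_ratio:
  assumes "\<forall>d\<in>set ds. derivation d" and "g \<noteq> 0" and "x \<noteq> 0"
  shows "Deltas (replicate (length ds) g) (deriv_ratio ds) x
    = of_nat (fact (length ds)) * (\<Prod>d\<leftarrow>ds. Fract (d g) g)"
  using assms(1)
proof (induction "length ds" arbitrary: ds)
  case 0
  then show ?case using assms(3) by (simp add: deriv_ratio_Nil)
next
  case (Suc n)
  let ?h = "\<lambda>d. Fract (d g) g"
  let ?term = "\<lambda>p. Deltas (replicate n g) (deriv_ratio (fst p)) x * deriv_ratio (snd p) g"
  \<comment> \<open>Only splittings moving exactly one derivation to the right survive the remaining n differences.\<close>
  have "?term p = (if length (snd p) = 1 then of_nat (fact n) * (\<Prod>d\<leftarrow>ds. ?h d) else 0)"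
    if p: "p \<in> set (tl (splits ds))" for p
  proof -
    have ps: "p \<in> set (splits ds)" using p by (metis list.set_intros(2) splits_eq_Cons)
    have der: "\<forall>d\<in>set (fst p). derivation d" using Suc.prems fst_tl_splits(2)[OF p] by blast
    show ?thesis
    proof (cases "length (snd p) = 1")
      case True
      then obtain e where e: "snd p = [e]" by (cases "snd p") auto
      then have "length (fst p) = n" using length_splits[OF ps] Suc.hyps(2) by simp
      then have "?term p = of_nat (fact n) * (\<Prod>d\<leftarrow>fst p. ?h d) * (\<Prod>d\<leftarrow>snd p. ?h d)"
        using Suc.hyps(1)[of "fst p"] der e by (simp add: deriv_ratio_def)
      then show ?thesis using True prod_list_splits[OF ps, of ?h] by (simp add: mult.assoc)
    next
      case False
      moreover have "length (snd p) \<noteq> 0" using snd_ne_Nil_if_in_tl_splits[OF p] by simp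
      ultimately have "length (fst p) < n" using length_splits[OF ps] Suc.hyps(2) by linarith
      then show ?thesis using False Deltas_deriv_ratio_eq_0[OF der, of "replicate n g"] assms(2) by simp
    qed
  qed
  then have "Deltas (replicate (Suc n) g) (deriv_ratio ds) x
      = (\<Sum>p\<leftarrow>tl (splits ds). if length (snd p) = 1 then of_nat (fact n) * (\<Prod>d\<leftarrow>ds. ?h d) else 0)"
    using Deltas_snoc_deriv_ratio[OF Suc.prems assms(2), of "replicate n g"]
    by (simp add: replicate_append_same[symmetric] cong: map_cong)
  also have "\<dots> = of_nat (Suc n) * (of_nat (fact n) * (\<Prod>d\<leftarrow>ds. ?h d))"
    using length_filter_tl_splits_snd_singleton[of ds] Suc.hyps(2)
    by (simp add: sum_list_map_filter'[symmetric] sum_list_triv)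
  finally show ?case using Suc.hyps(2)[symmetric] by (simp add: algebra_simps)
qed

lemma finite_derivation_zeros_on_line:
  fixes e :: "'a::idom \<Rightarrow> 'a"
  assumes "derivation e" and "CHAR('a) = 0" and "e g0 \<noteq> 0 \<or> e a \<noteq> 0"
  shows "finite {m::nat. e (g0 + of_nat m * a) = 0}" (is "finite ?Z")
proof -
  have e_line: "e (g0 + of_nat m * a) = e g0 + of_nat m * e a" for m
    using assms(1) by (simp add: derivation_add derivation_of_nat_mult)
  have unique: "m = m'" if "m \<in> ?Z" and "m' \<in> ?Z" for m m'
  proof -
    have zeros: "e g0 + of_nat m * e a = 0" "e g0 + of_nat m' * e a = 0"
      using that e_line by simp_all
    then have "e a \<noteq> 0" using assms(3) by auto
    moreover have "of_nat m * e a = of_nat m' * e a" using zeros by (metis add_left_cancel)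
    ultimately show ?thesis using assms(2) by (simp add: of_nat_eq_iff_cong_CHAR)
  qed
  show ?thesis
  proof (cases "?Z = {}")
    case False
    then obtain m0 where "m0 \<in> ?Z" by blast
    with unique have "?Z \<subseteq> {m0}" by blast
    then show ?thesis by (rule finite_subset) simp
  qed simp
qed

lemma ex_nonconstant_for_derivations:
  fixes ds :: "('a::idom \<Rightarrow> 'a) list"
  assumes "CHAR('a) = 0" and "\<forall>d\<in>set ds. derivation d \<and> d \<noteq> (\<lambda>_. 0)"
  shows "\<exists>g. g \<noteq> 0 \<and> (\<forall>d\<in>set ds. d g \<noteq> 0)"
  using assms(2)
proof (induction ds)
  case Nil
  show ?case by (intro exI[of _ 1]) simp
next
  case (Cons d ds)
  then obtain g0 where g0: "\<forall>e\<in>set ds. e g0 \<noteq> 0" by auto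
  from Cons.prems obtain a where a: "d a \<noteq> 0" by auto
  \<comment> \<open>Each derivation vanishes at most once on the line g0 + m a, so some point of it avoids all kernels.\<close>
  let ?Z = "\<lambda>e. {m::nat. e (g0 + of_nat m * a) = 0}"
  have "finite (\<Union>e\<in>set (d # ds). ?Z e)"
    using Cons.prems g0 a by (auto intro!: finite_derivation_zeros_on_line[OF _ assms(1)])
  then obtain m where m: "m \<notin> (\<Union>e\<in>set (d # ds). ?Z e)"
    using ex_new_if_finite[OF infinite_UNIV_nat] by blast
  then have "\<forall>e\<in>set (d # ds). e (g0 + of_nat m * a) \<noteq> 0" by blast
  moreover have "g0 + of_nat m * a \<noteq> 0" using calculation Cons.prems derivation_zero by force
  ultimately show ?case by blast
qed

lemma gp_vanish_mono:
  assumes "\<And>x y. x \<in> S \<Longrightarrow> y \<in> S \<Longrightarrow> x * y \<in> S"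
    and "gp_vanish S f k" and "-1 \<le> k" and "k \<le> l"
  shows "gp_vanish S f l"
proof -
  have "gp_vanish S f (k + int j)" for j
  proof (induction j)
    case (Suc j)
    show ?case unfolding gp_vanish_def
    proof (intro allI impI ballI)
      fix gs x assume gs: "length gs = nat (k + int (Suc j) + 1) \<and> set gs \<subseteq> S" and x: "x \<in> S"
      then obtain g gs' where "gs = g # gs'" and "length gs' = nat (k + int j + 1)"
        using assms(3) by (cases gs) auto
      with Suc gs x assms(1) show "Deltas gs f x = 0" by (simp add: gp_vanish_def Delta_def)
    qed
  qed (use assms(2) in simp)
  from this[of "nat (l - k)"] show ?thesis using assms(4) by simp
qed

lemma gp_degree_le:
  assumes "gp_vanish S f k" and "-1 \<le> k"
  shows "gp_degree S f \<le> k"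
proof -
  let ?P = "\<lambda>m::nat. gp_vanish S f (int m - 1)"
  have "?P (nat (k + 1))" using assms by simp
  then obtain m where m: "?P m" "\<forall>m'<m. \<not> ?P m'" using exists_least_iff[of ?P] by blast
  have "gp_degree S f = int m - 1"
    unfolding gp_degree_def
  proof (rule Least_equality)
    show "-1 \<le> int m - 1 \<and> gp_vanish S f (int m - 1)" using m(1) by simp
    fix l assume l: "-1 \<le> l \<and> gp_vanish S f l"
    then have "\<not> nat (l + 1) < m" using m(2) by force
    then show "int m - 1 \<le> l" using l by linarith
  qed
  moreover have "\<not> nat (k + 1) < m" using m(2) assms by force
  ultimately show ?thesis using assms(2) by linarith
qed

lemma gp_degree_eqI:
  assumes "\<And>x y. x \<in> S \<Longrightarrow> y \<in> S \<Longrightarrow> x * y \<in> S"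
    and "gp_vanish S f k" and "-1 \<le> k" and "\<not> gp_vanish S f (k - 1)"
  shows "gp_degree S f = k"
  unfolding gp_degree_def
proof (rule Least_equality)
  show "-1 \<le> k \<and> gp_vanish S f k" using assms(2,3) by simp
  fix l assume "-1 \<le> l \<and> gp_vanish S f l"
  then show "k \<le> l" using gp_vanish_mono[OF assms(1), of f l "k - 1"] assms(4) by force
qed

theorem lemma2p4:
  fixes ds :: "('a::idom \<Rightarrow> 'a) list"
  assumes "length ds \<ge> 1"
    and "\<forall>d\<in>set ds. derivation d \<and> d \<noteq> (\<lambda>_. 0)"
  defines "D \<equiv> foldr (\<circ>) ds id"
  shows "gen_poly {x::'a. x \<noteq> 0} (\<lambda>x. Fract (D x) x)
         \<and> gp_degree {x::'a. x \<noteq> 0} (\<lambda>x. Fract (D x) x) \<le> int (length ds)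
         \<and> (CHAR('a) = 0 \<longrightarrow> gp_degree {x::'a. x \<noteq> 0} (\<lambda>x. Fract (D x) x) = int (length ds))"
proof -
  let ?S = "{x::'a. x \<noteq> 0}" and ?n = "length ds"
  have der: "\<forall>d\<in>set ds. derivation d" using assms(2) by blast
  have f: "(\<lambda>x. Fract (D x) x) = deriv_ratio ds"
    by (simp add: fun_eq_iff D_def deriv_ratio_def comp_list_def)
  have vanish: "gp_vanish ?S (deriv_ratio ds) (int ?n)"
    using Deltas_deriv_ratio_eq_0[OF der] by (auto simp: gp_vanish_def subset_iff nat_add_distrib)
  have exact: "gp_degree ?S (deriv_ratio ds) = int ?n" if char0: "CHAR('a) = 0"
  proof -
    obtain g :: 'a where g: "g \<noteq> 0" "\<forall>d\<in>set ds. d g \<noteq> 0"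
      using ex_nonconstant_for_derivations[OF char0 assms(2)] by blast
    have "(of_nat (fact ?n) :: 'a fract) \<noteq> 0"
      using char0 by (simp add: of_nat_fract Fract_eq_0_iff of_nat_eq_0_iff_char_dvd)
    moreover have "(\<Prod>d\<leftarrow>ds. Fract (d g) g) \<noteq> 0"
      using g by (auto simp: prod_list_zero_iff Fract_eq_0_iff)
    ultimately have "Deltas (replicate ?n g) (deriv_ratio ds) 1 \<noteq> 0"
      by (simp add: Deltas_replicate_deriv_ratio[OF der g(1)])
    then have "\<not> gp_vanish ?S (deriv_ratio ds) (int ?n - 1)"
      using g(1) unfolding gp_vanish_def by (auto intro!: exI[of _ "replicate ?n g"] exI[of _ 1])
    then show ?thesis using gp_degree_eqI[OF _ vanish] by simp
  qed
  have "gen_poly ?S (deriv_ratio ds)" unfolding gen_poly_def using vanish by (intro exI[of _ "int ?n"]) simp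
  then show ?thesis unfolding f using exact gp_degree_le[OF vanish] by simp
qed

end
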